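(* Let $G_1,\ldots,G_k$ be groups, $G=G_1\times\cdots\times G_k$, and for $i=1,\ldots,k$ let $H_i\le G_i$. Let $H\le G$ be a subgroup such that $H_1\times\cdots\times H_k\trianglelefteq H$, the quotient $N_G(H_1\times\cdots\times H_k)/(H_1\times\cdots\times H_k)$ is abelian, and $N_{G_i}(\sigma_i(H))=N_{G_i}(H_i)$ for all $i$. Then $$N_G(H)=N_G(H_1\times\cdots\times H_k)=N_{G_1}(H_1)\times\cdots\times N_{G_k}(H_k).$$
   Context: $\sigma_i:G\to G_i$ denotes the natural projection onto the $i$-th direct factor. *)

theory Defs
  imports "HOL-Algebra.Algebra"
begin

definition proj_set :: "'i \<Rightarrow> ('i \<Rightarrow> 'a) set \<Rightarrow> 'a set" where
  "proj_set i H = (\<lambda>x. x i) ` H"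

end

(* Conjugation in a product group acts componentwise, so the normalizer of a product of
   subgroups is the product of their normalizers, and an element normalizing H has i-th
   component normalizing sigma_i(H); by hypothesis the latter normalizer is N(H_i), giving
   N(H) <= N(K) for K = H_1 x ... x H_k.  Conversely, since H <= N(K) and N(K)/K is abelian,
   every commutator [g, h] with g in N(K), h in H lies in K <= H, so g h g^-1 = [g, h] h is in H
   and N(K) <= N(H). *)

theory Submission
  imports Defs
begin

lemma (in group) normalizer_altdef:
  assumes "S \<subseteq> carrier G"
  shows "normalizer G S = {g \<in> carrier G. (\<lambda>s. g \<otimes> s \<otimes> inv g) ` S = S}"
  using assms unfolding normalizer_def stabilizer_def l_coset_def r_coset_def by auto

lemma (in group) subgroup_subset_normalizerI:
  assumes M: "subgroup M G" and S: "S \<subseteq> carrier G"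
    and conj: "\<And>g s. g \<in> M \<Longrightarrow> s \<in> S \<Longrightarrow> g \<otimes> s \<otimes> inv g \<in> S"
  shows "M \<subseteq> normalizer G S"
proof
  fix g assume g: "g \<in> M"
  have gc: "g \<in> carrier G"
    using subgroup.mem_carrier[OF M g] .
  have g': "inv g \<in> M"
    using subgroup.m_inv_closed[OF M g] .
  have "S \<subseteq> (\<lambda>s. g \<otimes> s \<otimes> inv g) ` S"
  proof
    fix s assume s: "s \<in> S"
    then have "s \<in> carrier G"
      using S by blast
    then have "s = g \<otimes> (inv g \<otimes> s \<otimes> inv (inv g)) \<otimes> inv g"
      using gc by (simp add: m_assoc flip: m_assoc[of g "inv g" s])
    with conj[OF g' s] show "s \<in> (\<lambda>s. g \<otimes> s \<otimes> inv g) ` S"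
      by blast
  qed
  with conj[OF g] have "(\<lambda>s. g \<otimes> s \<otimes> inv g) ` S = S"
    by blast
  with gc show "g \<in> normalizer G S"
    by (simp add: normalizer_altdef[OF S])
qed

lemma image_componentwise_PiE:
  "(\<lambda>x. \<lambda>i\<in>I. f i (x i)) ` (\<Pi>\<^sub>E i\<in>I. A i) = (\<Pi>\<^sub>E i\<in>I. f i ` A i)"
proof
  show "(\<Pi>\<^sub>E i\<in>I. f i ` A i) \<subseteq> (\<lambda>x. \<lambda>i\<in>I. f i (x i)) ` (\<Pi>\<^sub>E i\<in>I. A i)"
  proof
    fix y assume y: "y \<in> (\<Pi>\<^sub>E i\<in>I. f i ` A i)"
    define x where "x = (\<lambda>i\<in>I. SOME a. a \<in> A i \<and> f i a = y i)"
    have x: "x i \<in> A i \<and> f i (x i) = y i" if "i \<in> I" for i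
    proof -
      have "\<exists>a. a \<in> A i \<and> f i a = y i"
        using y that by (fastforce simp: PiE_iff)
      from someI_ex[OF this] show ?thesis
        using that by (simp add: x_def)
    qed
    show "y \<in> (\<lambda>x. \<lambda>i\<in>I. f i (x i)) ` (\<Pi>\<^sub>E i\<in>I. A i)"
    proof
      show "x \<in> (\<Pi>\<^sub>E i\<in>I. A i)"
        using x by (simp add: x_def)
      show "y = (\<lambda>i\<in>I. f i (x i))"
        using x y by (auto simp: PiE_iff extensional_def)
    qed
  qed
next
  show "(\<lambda>x. \<lambda>i\<in>I. f i (x i)) ` (\<Pi>\<^sub>E i\<in>I. A i) \<subseteq> (\<Pi>\<^sub>E i\<in>I. f i ` A i)"
    by (auto simp: PiE_iff)
qed

lemma conj_product_group:
  assumes "\<And>i. i \<in> I \<Longrightarrow> group (G i)"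
    and "g \<in> carrier (product_group I G)" "s \<in> carrier (product_group I G)"
  shows "g \<otimes>\<^bsub>product_group I G\<^esub> s \<otimes>\<^bsub>product_group I G\<^esub> inv\<^bsub>product_group I G\<^esub> g
           = (\<lambda>i\<in>I. g i \<otimes>\<^bsub>G i\<^esub> s i \<otimes>\<^bsub>G i\<^esub> inv\<^bsub>G i\<^esub> g i)"
  using assms by (auto simp: fun_eq_iff)

lemma normalizer_PiE_product_group:
  assumes groups: "\<And>i. i \<in> I \<Longrightarrow> group (G i)"
    and subgroups: "\<And>i. i \<in> I \<Longrightarrow> subgroup (H i) (G i)"
  shows "normalizer (product_group I G) (\<Pi>\<^sub>E i\<in>I. H i) = (\<Pi>\<^sub>E i\<in>I. normalizer (G i) (H i))"
proof -
  let ?P = "product_group I G"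
  let ?conj = "\<lambda>i g h. g \<otimes>\<^bsub>G i\<^esub> h \<otimes>\<^bsub>G i\<^esub> inv\<^bsub>G i\<^esub> g"
  interpret P: group ?P using groups by simp
  have H_carrier: "H i \<subseteq> carrier (G i)" and H_nonempty: "H i \<noteq> {}" if "i \<in> I" for i
    using subgroups[OF that] subgroup.subset subgroup.one_closed by blast+
  have PiE_carrier: "(\<Pi>\<^sub>E i\<in>I. H i) \<subseteq> carrier ?P"
    using H_carrier by (auto simp: PiE_iff)
  have "g \<in> normalizer ?P (\<Pi>\<^sub>E i\<in>I. H i) \<longleftrightarrow> g \<in> (\<Pi>\<^sub>E i\<in>I. normalizer (G i) (H i))" for g
  proof (cases "g \<in> carrier ?P")
    case True
    have "(\<lambda>s. g \<otimes>\<^bsub>?P\<^esub> s \<otimes>\<^bsub>?P\<^esub> inv\<^bsub>?P\<^esub> g) ` (\<Pi>\<^sub>E i\<in>I. H i)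
        = (\<lambda>s. \<lambda>i\<in>I. ?conj i (g i) (s i)) ` (\<Pi>\<^sub>E i\<in>I. H i)"
      by (intro image_cong refl conj_product_group[OF groups True]) (use PiE_carrier in blast)+
    also have "\<dots> = (\<Pi>\<^sub>E i\<in>I. ?conj i (g i) ` H i)"
      by (rule image_componentwise_PiE)
    finally have "g \<in> normalizer ?P (\<Pi>\<^sub>E i\<in>I. H i)
        \<longleftrightarrow> (\<Pi>\<^sub>E i\<in>I. ?conj i (g i) ` H i) = (\<Pi>\<^sub>E i\<in>I. H i)"
      using True by (simp only: P.normalizer_altdef[OF PiE_carrier] mem_Collect_eq simp_thms)
    also have "\<dots> \<longleftrightarrow> (\<forall>i\<in>I. ?conj i (g i) ` H i = H i)"
      using H_nonempty by (intro PiE_eq_iff_not_empty) auto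
    also have "\<dots> \<longleftrightarrow> g \<in> (\<Pi>\<^sub>E i\<in>I. normalizer (G i) (H i))"
      using True by (auto simp: group.normalizer_altdef[OF groups H_carrier] PiE_iff)
    finally show ?thesis .
  next
    case False
    moreover have "normalizer ?P (\<Pi>\<^sub>E i\<in>I. H i) \<subseteq> carrier ?P"
      using subgroup.subset[OF P.normalizer_imp_subgroup[OF PiE_carrier]] .
    moreover have "(\<Pi>\<^sub>E i\<in>I. normalizer (G i) (H i)) \<subseteq> carrier ?P"
      unfolding carrier_product_group
      by (intro PiE_mono subgroup.subset group.normalizer_imp_subgroup groups H_carrier)
    ultimately show ?thesis
      by blast
  qed
  then show ?thesis
    by blast
qed

lemma normalizer_product_group_subset_proj:
  assumes groups: "\<And>i. i \<in> I \<Longrightarrow> group (G i)"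
    and H: "H \<subseteq> carrier (product_group I G)"
  shows "normalizer (product_group I G) H \<subseteq> (\<Pi>\<^sub>E i\<in>I. normalizer (G i) (proj_set i H))"
proof
  let ?P = "product_group I G"
  interpret P: group ?P using groups by simp
  fix g assume "g \<in> normalizer ?P H"
  then have g: "g \<in> carrier ?P" and conj_H: "(\<lambda>s. g \<otimes>\<^bsub>?P\<^esub> s \<otimes>\<^bsub>?P\<^esub> inv\<^bsub>?P\<^esub> g) ` H = H"
    by (simp_all add: P.normalizer_altdef[OF H])
  have "g i \<in> normalizer (G i) (proj_set i H)" if i: "i \<in> I" for i
  proof -
    have proj_carrier: "proj_set i H \<subseteq> carrier (G i)"
      using H i by (auto simp: proj_set_def PiE_iff)
    have conj_i: "(g \<otimes>\<^bsub>?P\<^esub> s \<otimes>\<^bsub>?P\<^esub> inv\<^bsub>?P\<^esub> g) i = g i \<otimes>\<^bsub>G i\<^esub> s i \<otimes>\<^bsub>G i\<^esub> inv\<^bsub>G i\<^esub> g i"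
      if "s \<in> H" for s
      using conj_product_group[OF groups g, of s] that H i by (simp only: subsetD restrict_apply')
    have "(\<lambda>h. g i \<otimes>\<^bsub>G i\<^esub> h \<otimes>\<^bsub>G i\<^esub> inv\<^bsub>G i\<^esub> g i) ` proj_set i H
        = proj_set i ((\<lambda>s. g \<otimes>\<^bsub>?P\<^esub> s \<otimes>\<^bsub>?P\<^esub> inv\<^bsub>?P\<^esub> g) ` H)"
      unfolding proj_set_def image_image by (intro image_cong refl conj_i[symmetric])
    also have "\<dots> = proj_set i H"
      by (simp only: conj_H)
    finally show ?thesis
      using g i by (auto simp: group.normalizer_altdef[OF groups[OF i] proj_carrier])
  qed
  then show "g \<in> (\<Pi>\<^sub>E i\<in>I. normalizer (G i) (proj_set i H))"
    using g by (simp add: PiE_iff)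
qed

lemma (in group) normalizer_subset_normalizer_of_comm_quotient:
  assumes H: "subgroup H G" and K: "K \<lhd> G\<lparr>carrier := H\<rparr>"
    and comm: "comm_group (G\<lparr>carrier := normalizer G K\<rparr> Mod K)"
  shows "normalizer G K \<subseteq> normalizer G H"
proof (rule subgroup_subset_normalizerI)
  have "subgroup K (G\<lparr>carrier := H\<rparr>)"
    using K normal_imp_subgroup by blast
  then have K_subgroup: "subgroup K G" and K_subset: "K \<subseteq> H"
    using incl_subgroup[OF H] subgroup.subset by force+
  then have K_carrier: "K \<subseteq> carrier G"
    using subgroup.subset by blast
  show N_subgroup: "subgroup (normalizer G K) G"
    using normalizer_imp_subgroup[OF K_carrier] .
  show H_carrier: "H \<subseteq> carrier G"
    using H subgroup.subset by blast
  have H_N: "H \<subseteq> normalizer G K"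
    using subgroup.subset[OF normal_imp_subgroup_normalizer[OF H K]] by simp
  have derived_K: "derived G (normalizer G K) \<subseteq> K"
    using derived_of_subgroup_minimal[OF subgroup_in_normalizer[OF K_subgroup] N_subgroup comm] .
  fix g h assume g: "g \<in> normalizer G K" and h: "h \<in> H"
  have g_carrier: "g \<in> carrier G" and h_carrier: "h \<in> carrier G"
    using g h N_subgroup H_carrier subgroup.subset by blast+
  have "g \<otimes> h \<otimes> inv g \<otimes> inv h \<in> K"
    using g h H_N derived_K unfolding derived_def by (blast intro: generate.incl)
  then have "g \<otimes> h \<otimes> inv g \<otimes> inv h \<otimes> h \<in> H"
    using K_subset h subgroup.m_closed[OF H] by blast
  then show "g \<otimes> h \<otimes> inv g \<in> H"
    using g_carrier h_carrier by (simp add: m_assoc)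
qed

theorem lemma5p1:
  fixes Gs :: "nat \<Rightarrow> ('a, 'b) monoid_scheme"
    and Hs :: "nat \<Rightarrow> 'a set"
    and H :: "(nat \<Rightarrow> 'a) set"
    and k :: nat
  assumes groups: "\<And>i. i \<in> {1..k} \<Longrightarrow> group (Gs i)"
    and subHi: "\<And>i. i \<in> {1..k} \<Longrightarrow> subgroup (Hs i) (Gs i)"
    and subH: "subgroup H (product_group {1..k} Gs)"
    and normal: "(\<Pi>\<^sub>E i\<in>{1..k}. Hs i) \<lhd> ((product_group {1..k} Gs)\<lparr>carrier := H\<rparr>)"
    and abelian: "comm_group (((product_group {1..k} Gs)\<lparr>carrier :=
                     normalizer (product_group {1..k} Gs) (\<Pi>\<^sub>E i\<in>{1..k}. Hs i)\<rparr>)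
                   Mod (\<Pi>\<^sub>E i\<in>{1..k}. Hs i))"
    and normproj: "\<And>i. i \<in> {1..k} \<Longrightarrow>
                     normalizer (Gs i) (proj_set i H) = normalizer (Gs i) (Hs i)"
  shows "normalizer (product_group {1..k} Gs) H
           = normalizer (product_group {1..k} Gs) (\<Pi>\<^sub>E i\<in>{1..k}. Hs i)
       \<and> normalizer (product_group {1..k} Gs) (\<Pi>\<^sub>E i\<in>{1..k}. Hs i)
           = (\<Pi>\<^sub>E i\<in>{1..k}. normalizer (Gs i) (Hs i))"
proof
  let ?P = "product_group {1..k} Gs"
  let ?K = "\<Pi>\<^sub>E i\<in>{1..k}. Hs i"
  show normalizer_K: "normalizer ?P ?K = (\<Pi>\<^sub>E i\<in>{1..k}. normalizer (Gs i) (Hs i))"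
    using normalizer_PiE_product_group[OF groups subHi] .
  have "normalizer ?P H \<subseteq> (\<Pi>\<^sub>E i\<in>{1..k}. normalizer (Gs i) (proj_set i H))"
    using normalizer_product_group_subset_proj[of "{1..k}" Gs, OF groups subgroup.subset[OF subH]] .
  also have "\<dots> = (\<Pi>\<^sub>E i\<in>{1..k}. normalizer (Gs i) (Hs i))"
    using normproj by (rule PiE_cong)
  also have "\<dots> = normalizer ?P ?K"
    by (rule normalizer_K[symmetric])
  finally have "normalizer ?P H \<subseteq> normalizer ?P ?K" .
  moreover have "normalizer ?P ?K \<subseteq> normalizer ?P H"
    using group.normalizer_subset_normalizer_of_comm_quotient
        [OF product_group[of "{1..k}" Gs, OF groups] subH normal abelian] .
  ultimately show "normalizer ?P H = normalizer ?P ?K"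
    by (rule subset_antisym)
qed

end
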